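(* Let $L>0$, $V\in C^0([0,L];\mathbb{R})$, $\varepsilon>0$, $q_\varepsilon\in L^\infty(0,L;\mathbb{R})$. For all $E\in\mathbb{R}$ and all $\psi\in H^2(0,L)\cap H^1_0(0,L)$ with $-\varepsilon^2\psi''+(V+q_\varepsilon)\psi=E\psi$, and all $x,y\in[0,L]$, $$\mathscr{E}(x)\le\exp\Big(\frac1\varepsilon|x-y|\big(\|V-E+1\|_{L^\infty(I_{x,y})}+\|q_\varepsilon\|_\infty\big)\Big)\mathscr{E}(y),$$ where $\mathscr{E}(x)=\varepsilon^2|\psi'(x)|^2+|\psi(x)|^2$ and $I_{x,y}$ is the interval between $x$ and $y$. *)

theory Defs
  imports "HOL-Probability.Essential_Supremum"
begin

definition Linf_norm :: "real set \<Rightarrow> (real \<Rightarrow> real) \<Rightarrow> real" where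
  "Linf_norm S f = real_of_ereal (esssup (lebesgue_on S) (\<lambda>x. ereal \<bar>f x\<bar>))"

end

theory Submission
  imports Defs
begin

(* Write En = eps^2 |psi'|^2 + |psi|^2 and K for the sum of the two essential suprema.  The
   equation gives En' = 2 (V + q - E + 1) Re (psi * cnj psi') almost everywhere, and
   2 |psi| |psi'| <= En / eps, so |En'| <= (K / eps) En and Gronwall's inequality yields the claim.
   To avoid differentiating En almost everywhere, derivatives are replaced by increments: using
   the equation in integral form and freezing psi, psi' and the coefficient at a point p of [s, t]
   one gets |En t - En s| <= (K / eps) (t - s) En p + C (t - s)^2, and a discrete Gronwall
   inequality on ever finer uniform partitions of the interval between x and y gives
   En x <= exp (K |x - y| / eps) En y. *)

section \<open>Essential suprema and null sets\<close>

lemma Linf_norm_nonneg: "Linf_norm S f \<ge> 0"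
proof -
  let ?g = "\<lambda>x. ereal \<bar>f x\<bar>"
  consider "?g \<notin> borel_measurable (lebesgue_on S)"
    | "?g \<in> borel_measurable (lebesgue_on S)" "emeasure (lebesgue_on S) (space (lebesgue_on S)) = 0"
    | "?g \<in> borel_measurable (lebesgue_on S)" "emeasure (lebesgue_on S) (space (lebesgue_on S)) \<noteq> 0"
    by blast
  then show ?thesis
  proof cases
    case 1
    then show ?thesis by (simp add: Linf_norm_def esssup_non_measurable top_ereal_def)
  next
    case 2
    then show ?thesis by (simp add: Linf_norm_def esssup_zero_space)
  next
    case 3
    then have "esssup (lebesgue_on S) (\<lambda>x. 0) \<le> esssup (lebesgue_on S) ?g"
      by (intro esssup_mono) auto
    with 3 show ?thesis by (simp add: Linf_norm_def esssup_const real_of_ereal_pos)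
  qed
qed

lemma AE_le_Linf_norm:
  assumes "f \<in> borel_measurable (lebesgue_on S)" and "AE x in lebesgue_on S. \<bar>f x\<bar> \<le> C"
  shows "AE x in lebesgue_on S. \<bar>f x\<bar> \<le> Linf_norm S f"
proof -
  let ?g = "\<lambda>x. ereal \<bar>f x\<bar>"
  have "esssup (lebesgue_on S) ?g \<le> ereal C"
    using assms by (intro esssup_I) (auto elim: eventually_mono)
  moreover have "AE x in lebesgue_on S. ?g x \<le> esssup (lebesgue_on S) ?g"
    by (rule esssup_AE)
  ultimately show ?thesis
    unfolding Linf_norm_def by (cases "esssup (lebesgue_on S) ?g") (auto elim: eventually_mono)
qed

lemma AE_le_Linf_norm_continuous:
  assumes "continuous_on S f" and "compact S"
  shows "AE x in lebesgue_on S. \<bar>f x\<bar> \<le> Linf_norm S f"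
proof -
  obtain C where "\<forall>x\<in>S. norm (f x) \<le> C"
    using assms compact_continuous_image compact_imp_bounded bounded_iff by (metis imageI)
  then have "AE x in lebesgue_on S. \<bar>f x\<bar> \<le> C"
    by (intro AE_I2) auto
  moreover have "f \<in> borel_measurable (lebesgue_on S)"
    using assms by (simp add: continuous_imp_measurable_on_sets_lebesgue compact_imp_closed
        borel_closed)
  ultimately show ?thesis by (rule AE_le_Linf_norm[rotated])
qed

lemma AE_lebesgue_onE:
  assumes "AE x in lebesgue_on S. P x" and "S \<in> sets lebesgue"
  obtains N where "negligible N" and "\<And>x. x \<in> S - N \<Longrightarrow> P x"
proof -
  have "AE x in lebesgue. x \<in> S \<longrightarrow> P x"
    using assms by (simp add: AE_restrict_space_iff)
  then show ?thesis
    using that by (auto simp: eventually_ae_filter_negligible)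
qed

section \<open>Gronwall's inequality from local increments\<close>

lemma discrete_gronwall:
  fixes e :: "nat \<Rightarrow> real"
  assumes r: "r \<ge> 1" and c: "c \<ge> 0" and step: "\<And>i. i < n \<Longrightarrow> e i \<le> r * e (Suc i) + c"
  shows "e 0 \<le> r ^ n * e n + n * r ^ n * c"
proof -
  have "e (n - m) \<le> r ^ m * e n + m * r ^ m * c" if "m \<le> n" for m
    using that
  proof (induction m)
    case 0
    then show ?case by simp
  next
    case (Suc m)
    have "c \<le> r ^ Suc m * c"
      using one_le_power[OF r, of "Suc m"] c by (simp add: mult_le_cancel_right1)
    have "e (n - Suc m) \<le> r * e (n - m) + c"
      using step[of "n - Suc m"] Suc.prems by (simp add: Suc_diff_Suc)
    also have "\<dots> \<le> r * (r ^ m * e n + m * r ^ m * c) + c"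
      using Suc r by (intro add_right_mono mult_left_mono) auto
    also have "\<dots> \<le> r ^ Suc m * e n + Suc m * r ^ Suc m * c"
      using \<open>c \<le> r ^ Suc m * c\<close> by (simp add: algebra_simps)
    finally show ?case .
  qed
  from this[of n] show ?thesis by simp
qed

lemma gronwall_local_increments:
  fixes f :: "real \<Rightarrow> real"
  assumes K: "K \<ge> 0" and C: "C \<ge> 0"
    and incr: "\<And>s p t. lo \<le> s \<Longrightarrow> s \<le> p \<Longrightarrow> p \<le> t \<Longrightarrow> t \<le> hi \<Longrightarrow>
                 \<bar>f t - f s\<bar> \<le> K * (t - s) * f p + C * (t - s)\<^sup>2"
    and x: "x \<in> {lo..hi}" and y: "y \<in> {lo..hi}" and fy: "f y \<ge> 0"
  shows "f x \<le> exp (K * \<bar>x - y\<bar>) * f y"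
proof -
  define d where "d = \<bar>x - y\<bar>"
  have approx: "f x \<le> exp (K * d) * f y + exp (K * d) * C * d\<^sup>2 / n" if n: "n > 0" for n :: nat
  proof -
    define h where "h = d / n"
    have h: "h \<ge> 0" by (simp add: h_def d_def)
    define pt where "pt i = (1 - i / n) *\<^sub>R x + (i / n) *\<^sub>R y" for i :: nat
    have pt_in: "pt i \<in> {lo..hi}" if "i \<le> n" for i
      unfolding pt_def using that x y n by (intro convexD) (auto simp: divide_le_eq_1)
    have pt_dist: "\<bar>pt i - pt (Suc i)\<bar> = h" for i
    proof -
      have "pt i - pt (Suc i) = (x - y) / n"
        using n by (simp add: pt_def field_simps)
      then show ?thesis by (simp add: h_def d_def)
    qed
    have step: "f (pt i) \<le> (1 + K * h) * f (pt (Suc i)) + C * h\<^sup>2" if "i < n" for i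
    proof -
      let ?s = "min (pt i) (pt (Suc i))" and ?t = "max (pt i) (pt (Suc i))"
      have "pt i \<in> {lo..hi}" "pt (Suc i) \<in> {lo..hi}"
        using pt_in that by auto
      then have "\<bar>f ?t - f ?s\<bar> \<le> K * (?t - ?s) * f (pt (Suc i)) + C * (?t - ?s)\<^sup>2"
        by (intro incr) auto
      moreover have "?t - ?s = h"
        using pt_dist[of i] by linarith
      moreover have "f (pt i) - f (pt (Suc i)) \<le> \<bar>f ?t - f ?s\<bar>"
        by (auto simp: min_def max_def)
      ultimately show ?thesis by (simp add: algebra_simps)
    qed
    have growth: "(1 + K * h) ^ n \<le> exp (K * d)"
    proof -
      have "(1 + K * h) ^ n \<le> exp (K * h) ^ n"
        using K h by (intro power_mono) (auto simp: exp_ge_add_one_self)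
      also have "\<dots> = exp (K * d)"
        using n by (simp add: exp_of_nat_mult[symmetric] h_def)
      finally show ?thesis .
    qed
    have "f (pt 0) \<le> (1 + K * h) ^ n * f (pt n) + n * (1 + K * h) ^ n * (C * h\<^sup>2)"
      using K h C step by (intro discrete_gronwall) auto
    also have "\<dots> \<le> exp (K * d) * f y + n * exp (K * d) * (C * h\<^sup>2)"
    proof (rule add_mono)
      show "(1 + K * h) ^ n * f (pt n) \<le> exp (K * d) * f y"
        using n growth fy by (simp add: pt_def mult_right_mono)
      show "n * (1 + K * h) ^ n * (C * h\<^sup>2) \<le> n * exp (K * d) * (C * h\<^sup>2)"
        using growth C by (simp add: mult_right_mono mult_left_mono)
    qed
    also have "n * exp (K * d) * (C * h\<^sup>2) = exp (K * d) * C * d\<^sup>2 / n"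
      using n by (simp add: h_def power2_eq_square field_simps)
    finally show ?thesis by (simp add: pt_def)
  qed
  have "(\<lambda>n. exp (K * d) * f y + exp (K * d) * C * d\<^sup>2 / real n) \<longlonglongrightarrow> exp (K * d) * f y"
    by (intro tendsto_eq_intros lim_const_over_n) auto
  then show ?thesis
    unfolding d_def[symmetric] by (rule LIMSEQ_le_const) (use approx in \<open>auto intro: exI[of _ 1]\<close>)
qed

section \<open>Integral bounds on an interval\<close>

lemma has_integral_increment:
  fixes g F :: "real \<Rightarrow> 'a::banach"
  assumes F: "\<And>t. t \<in> {a..b} \<Longrightarrow> (g has_integral (F t - F a)) {a..t}"
    and st: "a \<le> s" "s \<le> t" "t \<le> b"
  shows "(g has_integral (F t - F s)) {s..t}"
proof -
  have "g integrable_on {a..t}"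
    using F[of t] st by (simp add: has_integral_integrable)
  then have int: "(g has_integral integral {s..t} g) {s..t}"
    using st by (simp add: integrable_on_subinterval integrable_integral)
  have "(g has_integral (F s - F a) + integral {s..t} g) {a..t}"
    using F[of s] st by (intro has_integral_combine[OF _ _ _ int]) auto
  from has_integral_unique[OF this F[of t]] st have "integral {s..t} g = F t - F s"
    by (simp add: algebra_simps)
  with int show ?thesis
    by simp
qed

lemma has_integral_deviation_bound:
  fixes f :: "real \<Rightarrow> 'a::real_normed_vector"
  assumes "(f has_integral I) {s..t}" and "s \<le> t" and "\<And>u. u \<in> {s..t} \<Longrightarrow> norm (f u - c) \<le> \<delta>"
  shows "norm (I - (t - s) *\<^sub>R c) \<le> \<delta> * (t - s)"
proof -
  have "0 \<le> \<delta>"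
    using order_trans[OF norm_ge_zero assms(3)[of s]] assms(2) by simp
  moreover have "((\<lambda>u. f u - c) has_integral (I - (t - s) *\<^sub>R c)) (cbox s t)"
    using has_integral_diff[OF assms(1) has_integral_const_real[of c s t]] assms(2) by simp
  ultimately have "norm (I - (t - s) *\<^sub>R c) \<le> \<delta> * measure lborel (cbox s t)"
    by (rule has_integral_bound) (use assms(3) in auto)
  then show ?thesis
    using assms(2) by simp
qed

lemma lipschitz_of_integrand_bound:
  fixes F g :: "real \<Rightarrow> 'a::real_normed_vector"
  assumes F: "\<And>s t. a \<le> s \<Longrightarrow> s \<le> t \<Longrightarrow> t \<le> b \<Longrightarrow> (g has_integral (F t - F s)) {s..t}"
    and g: "\<And>u. u \<in> {a..b} \<Longrightarrow> norm (g u) \<le> M"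
    and u: "u \<in> {a..b}" and v: "v \<in> {a..b}"
  shows "norm (F u - F v) \<le> M * \<bar>u - v\<bar>"
proof -
  have le: "norm (F t - F s) \<le> M * (t - s)" if "s \<in> {a..b}" "t \<in> {a..b}" "s \<le> t" for s t
    using has_integral_deviation_bound[OF F[of s t], of 0 M] that g by auto
  show ?thesis
    using le[OF u v] le[OF v u] by (cases "v \<le> u") (auto simp: norm_minus_commute)
qed

section \<open>Energy estimates\<close>

definition energy :: "real \<Rightarrow> (real \<Rightarrow> 'a::real_normed_vector) \<Rightarrow> (real \<Rightarrow> 'a) \<Rightarrow> real \<Rightarrow> real"
  where "energy \<epsilon> psi dpsi t = \<epsilon>\<^sup>2 * (norm (dpsi t))\<^sup>2 + (norm (psi t))\<^sup>2"

lemma energy_nonneg: "energy \<epsilon> psi dpsi t \<ge> 0"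
  by (simp add: energy_def)

lemma two_inner_le_energy:
  fixes a d :: "'a::real_inner"
  assumes "e > 0"
  shows "2 * \<bar>inner a d\<bar> \<le> (e\<^sup>2 * (norm d)\<^sup>2 + (norm a)\<^sup>2) / e"
proof -
  have "2 * \<bar>inner a d\<bar> * e \<le> 2 * (norm a * norm d) * e"
    using assms Cauchy_Schwarz_ineq2[of a d] by simp
  also have "\<dots> \<le> e\<^sup>2 * (norm d)\<^sup>2 + (norm a)\<^sup>2"
    using sum_squares_bound[of "e * norm d" "norm a"] by (simp add: power_mult_distrib algebra_simps)
  finally show ?thesis
    using assms by (simp add: pos_le_divide_eq)
qed

(* At, As, Ap and Dt, Ds, Dp are psi and psi' at t, s and at the frozen point p;
   Om is the integral of the coefficient over [s, t]. *)
lemma energy_increment_bound: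
  fixes At As Ap Dt Ds Dp :: "'a::real_inner"
  assumes e: "e > 0" and h: "h \<ge> 0"
    and D_incr: "norm (e\<^sup>2 *\<^sub>R (Dt - Ds) - Om *\<^sub>R Ap) \<le> M\<^sup>2 * h\<^sup>2"
    and A_incr: "norm (At - As - h *\<^sub>R Dp) \<le> M * h\<^sup>2"
    and near: "norm (Dt - Dp) \<le> M * h" "norm (Ds - Dp) \<le> M * h"
              "norm (At - Ap) \<le> M * h" "norm (As - Ap) \<le> M * h"
    and bounds: "norm At \<le> M" "norm As \<le> M" "norm Ap \<le> M"
                "norm Dt \<le> M" "norm Ds \<le> M" "norm Dp \<le> M"
    and Om: "\<bar>Om\<bar> \<le> M * h"
  shows "\<bar>(e\<^sup>2 * (norm Dt)\<^sup>2 + (norm At)\<^sup>2) - (e\<^sup>2 * (norm Ds)\<^sup>2 + (norm As)\<^sup>2)\<bar>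
     \<le> \<bar>Om + h\<bar> / e * (e\<^sup>2 * (norm Dp)\<^sup>2 + (norm Ap)\<^sup>2) + 4 * (M ^ 3 + M\<^sup>2) * h\<^sup>2"
proof -
  have inner_le: "\<bar>inner u v\<bar> \<le> a * b" if "norm u \<le> a" "norm v \<le> b" for u v :: 'a and a b
    using Cauchy_Schwarz_ineq2[of u v] mult_mono[OF that order_trans[OF norm_ge_zero that(1)] norm_ge_zero]
    by linarith
  have sum_le: "norm (u + v) \<le> 2 * m" if "norm u \<le> m" "norm v \<le> m" for u v :: 'a and m
    using norm_triangle_ineq[of u v] that by linarith
  have "(e\<^sup>2 * (norm Dt)\<^sup>2 + (norm At)\<^sup>2) - (e\<^sup>2 * (norm Ds)\<^sup>2 + (norm As)\<^sup>2)
      = 2 * (Om + h) * inner Ap Dp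
        + inner (e\<^sup>2 *\<^sub>R (Dt - Ds) - Om *\<^sub>R Ap) (Dt + Ds) + Om * inner Ap ((Dt - Dp) + (Ds - Dp))
        + inner (At - As - h *\<^sub>R Dp) (At + As) + h * inner Dp ((At - Ap) + (As - Ap))"
    by (simp add: power2_norm_eq_inner inner_add_left inner_add_right inner_diff_left
        inner_diff_right inner_commute algebra_simps)
  moreover have "\<bar>2 * (Om + h) * inner Ap Dp\<bar> \<le> \<bar>Om + h\<bar> / e * (e\<^sup>2 * (norm Dp)\<^sup>2 + (norm Ap)\<^sup>2)"
  proof -
    have "\<bar>2 * (Om + h) * inner Ap Dp\<bar> = \<bar>Om + h\<bar> * (2 * \<bar>inner Ap Dp\<bar>)"
      by (simp only: abs_mult abs_numeral mult_ac)
    also have "\<dots> \<le> \<bar>Om + h\<bar> * ((e\<^sup>2 * (norm Dp)\<^sup>2 + (norm Ap)\<^sup>2) / e)"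
      by (rule mult_left_mono[OF two_inner_le_energy[OF e]]) simp
    finally show ?thesis
      by simp
  qed
  moreover have "\<bar>inner (e\<^sup>2 *\<^sub>R (Dt - Ds) - Om *\<^sub>R Ap) (Dt + Ds)\<bar> \<le> M\<^sup>2 * h\<^sup>2 * (2 * M)"
    using D_incr bounds by (intro inner_le sum_le)
  moreover have "\<bar>Om * inner Ap ((Dt - Dp) + (Ds - Dp))\<bar> \<le> M * h * (M * (2 * (M * h)))"
    using Om bounds near by (simp add: abs_mult) (intro mult_mono inner_le sum_le; simp add: h)
  moreover have "\<bar>inner (At - As - h *\<^sub>R Dp) (At + As)\<bar> \<le> M * h\<^sup>2 * (2 * M)"
    using A_incr bounds by (intro inner_le sum_le)
  moreover have "\<bar>h * inner Dp ((At - Ap) + (As - Ap))\<bar> \<le> h * (M * (2 * (M * h)))"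
    using h bounds near by (simp add: abs_mult) (intro mult_left_mono inner_le sum_le; simp)
  ultimately have "\<bar>(e\<^sup>2 * (norm Dt)\<^sup>2 + (norm At)\<^sup>2) - (e\<^sup>2 * (norm Ds)\<^sup>2 + (norm As)\<^sup>2)\<bar>
      \<le> \<bar>Om + h\<bar> / e * (e\<^sup>2 * (norm Dp)\<^sup>2 + (norm Ap)\<^sup>2)
        + (M\<^sup>2 * h\<^sup>2 * (2 * M) + M * h * (M * (2 * (M * h))) + M * h\<^sup>2 * (2 * M) + h * (M * (2 * (M * h))))"
    by linarith
  also have "M\<^sup>2 * h\<^sup>2 * (2 * M) + M * h * (M * (2 * (M * h))) + M * h\<^sup>2 * (2 * M) + h * (M * (2 * (M * h)))
      = 4 * (M ^ 3 + M\<^sup>2) * h\<^sup>2"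
    by (simp add: power2_eq_square power3_eq_cube algebra_simps)
  finally show ?thesis .
qed

lemma second_order_solution_bounds:
  fixes psi dpsi :: "real \<Rightarrow> 'a::banach" and w :: "real \<Rightarrow> real"
  assumes eps: "\<epsilon> > 0"
    and psi_deriv: "\<And>t. t \<in> {lo..hi} \<Longrightarrow> (psi has_vector_derivative dpsi t) (at t within {lo..hi})"
    and dpsi_int: "\<And>s t. lo \<le> s \<Longrightarrow> s \<le> t \<Longrightarrow> t \<le> hi \<Longrightarrow>
                     ((\<lambda>u. w u *\<^sub>R psi u) has_integral \<epsilon>\<^sup>2 *\<^sub>R (dpsi t - dpsi s)) {s..t}"
    and w_bound: "\<And>u. u \<in> {lo..hi} \<Longrightarrow> \<bar>w u\<bar> \<le> B"
  obtains M where "B \<le> M"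
    and "\<And>u. u \<in> {lo..hi} \<Longrightarrow> norm (psi u) \<le> M" "\<And>u. u \<in> {lo..hi} \<Longrightarrow> norm (dpsi u) \<le> M"
    and "\<And>u v. u \<in> {lo..hi} \<Longrightarrow> v \<in> {lo..hi} \<Longrightarrow> norm (psi u - psi v) \<le> M * \<bar>u - v\<bar>"
    and "\<And>u v. u \<in> {lo..hi} \<Longrightarrow> v \<in> {lo..hi} \<Longrightarrow> norm (dpsi u - dpsi v) \<le> M * \<bar>u - v\<bar>"
proof -
  obtain M0 where M0: "M0 > 0" "\<And>u. u \<in> {lo..hi} \<Longrightarrow> norm (psi u) \<le> M0"
  proof -
    have "continuous_on {lo..hi} psi"
      using psi_deriv continuous_on_vector_derivative by blast
    then have "bounded (psi ` {lo..hi})"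
      by (intro compact_imp_bounded compact_continuous_image) auto
    then show ?thesis
      using that by (auto simp: bounded_pos)
  qed
  define M2 where "M2 = \<bar>B\<bar> * M0 / \<epsilon>\<^sup>2"
  have dpsi_lip: "norm (dpsi u - dpsi v) \<le> M2 * \<bar>u - v\<bar>" if "u \<in> {lo..hi}" "v \<in> {lo..hi}" for u v
  proof (rule lipschitz_of_integrand_bound[OF _ _ that])
    show "((\<lambda>u. (1 / \<epsilon>\<^sup>2) *\<^sub>R (w u *\<^sub>R psi u)) has_integral dpsi t - dpsi s) {s..t}"
      if "lo \<le> s" "s \<le> t" "t \<le> hi" for s t
      using has_integral_cmul[OF dpsi_int[OF that], of "1 / \<epsilon>\<^sup>2"] eps by simp
    show "norm ((1 / \<epsilon>\<^sup>2) *\<^sub>R (w u *\<^sub>R psi u)) \<le> M2" if "u \<in> {lo..hi}" for u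
      using w_bound[OF that] M0(2)[OF that] eps
      by (simp add: M2_def divide_right_mono mult_mono' abs_le_self_iff)
  qed
  have M2: "M2 \<ge> 0"
    using M0 eps by (simp add: M2_def)
  define M1 where "M1 = norm (dpsi lo) + M2 * \<bar>hi - lo\<bar>"
  have dpsi_bound: "norm (dpsi u) \<le> M1" if "u \<in> {lo..hi}" for u
  proof -
    have "norm (dpsi u - dpsi lo) \<le> M2 * \<bar>u - lo\<bar>"
      using dpsi_lip[OF that, of lo] that by simp
    also have "\<dots> \<le> M2 * \<bar>hi - lo\<bar>"
      using that M2 by (intro mult_left_mono) auto
    finally show ?thesis
      unfolding M1_def using norm_triangle_ineq2[of "dpsi u" "dpsi lo"] by linarith
  qed
  have psi_lip: "norm (psi u - psi v) \<le> M1 * \<bar>u - v\<bar>" if "u \<in> {lo..hi}" "v \<in> {lo..hi}" for u v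
  proof (rule lipschitz_of_integrand_bound[OF _ dpsi_bound that])
    show "(dpsi has_integral psi t - psi s) {s..t}" if "lo \<le> s" "s \<le> t" "t \<le> hi" for s t
      using that by (intro fundamental_theorem_of_calculus)
        (auto intro!: has_vector_derivative_within_subset[OF psi_deriv])
  qed
  have nonneg: "0 \<le> M0" "0 \<le> M1" "0 \<le> \<bar>B\<bar>"
    using M0 M2 by (auto simp: M1_def)
  show ?thesis
  proof (rule that[of "M0 + M1 + M2 + \<bar>B\<bar>"])
    fix u v assume "u \<in> {lo..hi}" "v \<in> {lo..hi}"
    show "norm (psi u - psi v) \<le> (M0 + M1 + M2 + \<bar>B\<bar>) * \<bar>u - v\<bar>"
      using psi_lip[OF \<open>u \<in> _\<close> \<open>v \<in> _\<close>] by (rule order_trans)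
        (use nonneg M2 in \<open>auto intro: mult_right_mono\<close>)
    show "norm (dpsi u - dpsi v) \<le> (M0 + M1 + M2 + \<bar>B\<bar>) * \<bar>u - v\<bar>"
      using dpsi_lip[OF \<open>u \<in> _\<close> \<open>v \<in> _\<close>] by (rule order_trans)
        (use nonneg M2 in \<open>auto intro: mult_right_mono\<close>)
  qed (use M0 M2 dpsi_bound nonneg in \<open>fastforce+\<close>)
qed

lemma energy_local_increments:
  fixes psi dpsi :: "real \<Rightarrow> 'a::{real_inner,banach}" and w :: "real \<Rightarrow> real"
  assumes eps: "\<epsilon> > 0"
    and psi_deriv: "\<And>t. t \<in> {lo..hi} \<Longrightarrow> (psi has_vector_derivative dpsi t) (at t within {lo..hi})"
    and dpsi_int: "\<And>s t. lo \<le> s \<Longrightarrow> s \<le> t \<Longrightarrow> t \<le> hi \<Longrightarrow>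
                     ((\<lambda>u. w u *\<^sub>R psi u) has_integral \<epsilon>\<^sup>2 *\<^sub>R (dpsi t - dpsi s)) {s..t}"
    and w_int: "w integrable_on {lo..hi}"
    and w_bound: "\<And>u. u \<in> {lo..hi} \<Longrightarrow> \<bar>w u + 1\<bar> \<le> K"
  obtains C where "C \<ge> 0"
    and "\<And>s p t. lo \<le> s \<Longrightarrow> s \<le> p \<Longrightarrow> p \<le> t \<Longrightarrow> t \<le> hi \<Longrightarrow>
           \<bar>energy \<epsilon> psi dpsi t - energy \<epsilon> psi dpsi s\<bar>
             \<le> K / \<epsilon> * (t - s) * energy \<epsilon> psi dpsi p + C * (t - s)\<^sup>2"
proof -
  have w_bound': "\<bar>w u\<bar> \<le> \<bar>K\<bar> + 1" if "u \<in> {lo..hi}" for u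
    using w_bound[OF that] by linarith
  obtain M where "\<bar>K\<bar> + 1 \<le> M"
    and bounds: "\<And>u. u \<in> {lo..hi} \<Longrightarrow> norm (psi u) \<le> M" "\<And>u. u \<in> {lo..hi} \<Longrightarrow> norm (dpsi u) \<le> M"
    and psi_lip: "\<And>u v. u \<in> {lo..hi} \<Longrightarrow> v \<in> {lo..hi} \<Longrightarrow> norm (psi u - psi v) \<le> M * \<bar>u - v\<bar>"
    and dpsi_lip: "\<And>u v. u \<in> {lo..hi} \<Longrightarrow> v \<in> {lo..hi} \<Longrightarrow> norm (dpsi u - dpsi v) \<le> M * \<bar>u - v\<bar>"
    by (rule second_order_solution_bounds[where w = w, OF eps psi_deriv dpsi_int w_bound']) blast+
  then have w_M: "\<bar>w u\<bar> \<le> M" if "u \<in> {lo..hi}" for u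
    using w_bound'[OF that] by linarith
  have M: "M \<ge> 0"
    using \<open>\<bar>K\<bar> + 1 \<le> M\<close> by linarith
  show ?thesis
  proof (rule that[of "4 * (M ^ 3 + M\<^sup>2)"])
    show "0 \<le> 4 * (M ^ 3 + M\<^sup>2)"
      using M by simp
  next
    fix s p t assume st: "lo \<le> s" "s \<le> p" "p \<le> t" "t \<le> hi"
    define h where "h = t - s"
    have h: "h \<ge> 0" and sub: "{s..t} \<subseteq> {lo..hi}" and p: "p \<in> {lo..hi}"
      using st by (auto simp: h_def)
    have near: "norm (f u - f p) \<le> M * h"
      if "u \<in> {s..t}" and lip: "\<And>u v. u \<in> {lo..hi} \<Longrightarrow> v \<in> {lo..hi} \<Longrightarrow> norm (f u - f v) \<le> M * \<bar>u - v\<bar>"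
      for u and f :: "real \<Rightarrow> 'a"
      using order_trans[OF lip mult_left_mono[OF _ M]] that sub p st by (auto simp: h_def)
    define Om where "Om = integral {s..t} w"
    have Om_int: "(w has_integral Om) {s..t}"
      unfolding Om_def using integrable_on_subinterval[OF w_int] st by auto
    have "norm (Om - h *\<^sub>R (-1)) \<le> K * h"
      unfolding h_def by (rule has_integral_deviation_bound[OF Om_int]) (use st sub w_bound in auto)
    then have Om_h: "\<bar>Om + h\<bar> \<le> K * h"
      by simp
    have "norm (Om - h *\<^sub>R 0) \<le> M * h"
      unfolding h_def by (rule has_integral_deviation_bound[OF Om_int]) (use st sub w_M in auto)
    then have Om: "\<bar>Om\<bar> \<le> M * h"
      by simp
    have D_incr: "norm (\<epsilon>\<^sup>2 *\<^sub>R (dpsi t - dpsi s) - Om *\<^sub>R psi p) \<le> M\<^sup>2 * h\<^sup>2"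
    proof -
      have int: "((\<lambda>u. w u *\<^sub>R (psi u - psi p)) has_integral \<epsilon>\<^sup>2 *\<^sub>R (dpsi t - dpsi s) - Om *\<^sub>R psi p) {s..t}"
        using has_integral_diff[OF dpsi_int has_integral_scaleR_left[OF Om_int]] st
        by (simp add: scaleR_diff_right)
      have bound: "norm (w u *\<^sub>R (psi u - psi p) - 0) \<le> M * (M * h)" if "u \<in> {s..t}" for u
        using mult_mono[OF w_M near[OF that psi_lip]] that sub M by auto
      show ?thesis
        using has_integral_deviation_bound[OF int _ bound] st by (simp add: h_def power2_eq_square)
    qed
    have A_incr: "norm (psi t - psi s - h *\<^sub>R dpsi p) \<le> M * h\<^sup>2"
    proof -
      have "(dpsi has_integral psi t - psi s) {s..t}"
        using st by (intro fundamental_theorem_of_calculus)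
          (auto intro!: has_vector_derivative_within_subset[OF psi_deriv])
      then have "norm (psi t - psi s - (t - s) *\<^sub>R dpsi p) \<le> M * h * (t - s)"
        by (rule has_integral_deviation_bound) (use st near[OF _ dpsi_lip] in auto)
      then show ?thesis
        by (simp add: h_def power2_eq_square)
    qed
    have ts: "t \<in> {s..t}" "s \<in> {s..t}"
      using st by auto
    have "\<bar>energy \<epsilon> psi dpsi t - energy \<epsilon> psi dpsi s\<bar>
        \<le> \<bar>Om + h\<bar> / \<epsilon> * energy \<epsilon> psi dpsi p + 4 * (M ^ 3 + M\<^sup>2) * h\<^sup>2"
      unfolding energy_def
      by (rule energy_increment_bound[OF eps h D_incr A_incr near[OF ts(1) dpsi_lip] near[OF ts(2) dpsi_lip]
            near[OF ts(1) psi_lip] near[OF ts(2) psi_lip] _ _ _ _ _ _ Om])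
        (use bounds p sub ts in auto)
    also have "\<bar>Om + h\<bar> / \<epsilon> * energy \<epsilon> psi dpsi p \<le> K / \<epsilon> * h * energy \<epsilon> psi dpsi p"
      using Om_h eps by (intro mult_right_mono energy_nonneg) (auto simp: divide_right_mono)
    finally show "\<bar>energy \<epsilon> psi dpsi t - energy \<epsilon> psi dpsi s\<bar>
        \<le> K / \<epsilon> * (t - s) * energy \<epsilon> psi dpsi p + 4 * (M ^ 3 + M\<^sup>2) * (t - s)\<^sup>2"
      by (simp add: h_def)
  qed
qed

section \<open>The Schroedinger equation\<close>

lemma has_integral_of_ae_equation:
  fixes d2psi dpsi psi :: "real \<Rightarrow> 'a::banach"
  assumes dpsi: "\<And>t. t \<in> {a..b} \<Longrightarrow> (d2psi has_integral (dpsi t - dpsi a)) {a..t}"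
    and N: "negligible N" and eq: "\<And>u. u \<in> {s..t} - N \<Longrightarrow> w u *\<^sub>R psi u = c *\<^sub>R d2psi u"
    and st: "a \<le> s" "s \<le> t" "t \<le> b"
  shows "((\<lambda>u. w u *\<^sub>R psi u) has_integral c *\<^sub>R (dpsi t - dpsi s)) {s..t}"
proof (rule has_integral_spike[OF N])
  show "((\<lambda>u. c *\<^sub>R d2psi u) has_integral c *\<^sub>R (dpsi t - dpsi s)) {s..t}"
    by (rule has_integral_cmul[OF has_integral_increment[OF dpsi st]])
qed (use eq in auto)

lemma schroedinger_ae_bounds:
  fixes psi d2psi :: "real \<Rightarrow> complex"
  assumes V_cont: "continuous_on {0..L} V"
    and q_meas: "q \<in> borel_measurable (lebesgue_on {0..L})"
    and q_bdd: "\<exists>C. AE t in lebesgue_on {0..L}. \<bar>q t\<bar> \<le> C"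
    and eq: "AE t in lebesgue_on {0..L}.
               - complex_of_real (\<epsilon>^2) * d2psi t + complex_of_real (V t + q t) * psi t
               = complex_of_real E * psi t"
    and sub: "{lo..hi} \<subseteq> {0..L}"
  obtains N where "negligible N"
    and "\<And>t. t \<in> {lo..hi} - N \<Longrightarrow>
           \<bar>V t + q t - E + 1\<bar> \<le> Linf_norm {lo..hi} (\<lambda>t. V t - E + 1) + Linf_norm {0..L} q"
    and "\<And>t. t \<in> {lo..hi} - N \<Longrightarrow> \<epsilon>\<^sup>2 *\<^sub>R d2psi t = (V t + q t - E) *\<^sub>R psi t"
proof -
  obtain C where "AE t in lebesgue_on {0..L}. \<bar>q t\<bar> \<le> C"
    using q_bdd by blast
  from AE_le_Linf_norm[OF q_meas this] eq
  have "AE t in lebesgue_on {0..L}.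
          \<bar>q t\<bar> \<le> Linf_norm {0..L} q \<and> \<epsilon>\<^sup>2 *\<^sub>R d2psi t = (V t + q t - E) *\<^sub>R psi t"
    by eventually_elim (auto simp: scaleR_conv_of_real algebra_simps)
  then obtain N1 where "negligible N1" and N1: "\<And>t. t \<in> {0..L} - N1 \<Longrightarrow>
      \<bar>q t\<bar> \<le> Linf_norm {0..L} q \<and> \<epsilon>\<^sup>2 *\<^sub>R d2psi t = (V t + q t - E) *\<^sub>R psi t"
    by (rule AE_lebesgue_onE) auto
  have "continuous_on {lo..hi} (\<lambda>t. V t - E + 1)"
    using continuous_on_subset[OF V_cont sub] by (intro continuous_intros)
  from AE_le_Linf_norm_continuous[OF this compact_Icc]
  obtain N2 where "negligible N2"
    and N2: "\<And>t. t \<in> {lo..hi} - N2 \<Longrightarrow> \<bar>V t - E + 1\<bar> \<le> Linf_norm {lo..hi} (\<lambda>t. V t - E + 1)"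
    by (rule AE_lebesgue_onE) auto
  show ?thesis
  proof (rule that[of "N1 \<union> N2"])
    show "negligible (N1 \<union> N2)"
      using \<open>negligible N1\<close> \<open>negligible N2\<close> by simp
    fix t assume "t \<in> {lo..hi} - (N1 \<union> N2)"
    then have "t \<in> {0..L} - N1" "t \<in> {lo..hi} - N2"
      using sub by auto
    then show "\<bar>V t + q t - E + 1\<bar> \<le> Linf_norm {lo..hi} (\<lambda>t. V t - E + 1) + Linf_norm {0..L} q"
      and "\<epsilon>\<^sup>2 *\<^sub>R d2psi t = (V t + q t - E) *\<^sub>R psi t"
      using N1 N2 by fastforce+
  qed
qed

lemma schroedinger_integral_form:
  fixes psi dpsi d2psi :: "real \<Rightarrow> complex"
  assumes V_cont: "continuous_on {0..L} V"
    and q_meas: "q \<in> borel_measurable (lebesgue_on {0..L})"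
    and q_bdd: "\<exists>C. AE t in lebesgue_on {0..L}. \<bar>q t\<bar> \<le> C"
    and dpsi_deriv: "\<forall>t\<in>{0..L}. (d2psi has_integral (dpsi t - dpsi 0)) {0..t}"
    and eq: "AE t in lebesgue_on {0..L}.
               - complex_of_real (\<epsilon>^2) * d2psi t + complex_of_real (V t + q t) * psi t
               = complex_of_real E * psi t"
    and sub: "{lo..hi} \<subseteq> {0..L}"
  obtains w where "w integrable_on {lo..hi}"
    and "\<And>u. u \<in> {lo..hi} \<Longrightarrow>
           \<bar>w u + 1\<bar> \<le> Linf_norm {lo..hi} (\<lambda>t. V t - E + 1) + Linf_norm {0..L} q"
    and "\<And>s t. lo \<le> s \<Longrightarrow> s \<le> t \<Longrightarrow> t \<le> hi \<Longrightarrow>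
           ((\<lambda>u. w u *\<^sub>R psi u) has_integral \<epsilon>\<^sup>2 *\<^sub>R (dpsi t - dpsi s)) {s..t}"
proof -
  define K where "K = Linf_norm {lo..hi} (\<lambda>t. V t - E + 1) + Linf_norm {0..L} q"
  obtain N where N: "negligible N"
    and bound: "\<And>t. t \<in> {lo..hi} - N \<Longrightarrow> \<bar>V t + q t - E + 1\<bar> \<le> K"
    and eqN: "\<And>t. t \<in> {lo..hi} - N \<Longrightarrow> \<epsilon>\<^sup>2 *\<^sub>R d2psi t = (V t + q t - E) *\<^sub>R psi t"
    unfolding K_def by (rule schroedinger_ae_bounds[OF V_cont q_meas q_bdd eq sub]) blast
  define w where "w t = (if t \<in> N then -1 else V t + q t - E)" for t
  have w_bound: "\<bar>w u + 1\<bar> \<le> K" if "u \<in> {lo..hi}" for u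
    using bound[of u] that Linf_norm_nonneg[of "{lo..hi}"] Linf_norm_nonneg[of "{0..L}"]
    by (auto simp: w_def K_def)
  have "w integrable_on {lo..hi}"
  proof (rule measurable_bounded_by_integrable_imp_integrable_real)
    show "w \<in> borel_measurable (lebesgue_on {lo..hi})"
      unfolding w_def
      using N measurable_restrict_mono[OF q_meas sub]
        continuous_imp_measurable_on_sets_lebesgue[OF continuous_on_subset[OF V_cont sub]]
      by (intro measurable_If_set borel_measurable_diff borel_measurable_add)
        (auto simp: negligible_iff_null_sets null_setsD2 sets_restrict_space_iff)
    show "\<bar>w u\<bar> \<le> K + 1" if "u \<in> {lo..hi}" for u
      using w_bound[OF that] by linarith
  qed auto
  moreover have "((\<lambda>u. w u *\<^sub>R psi u) has_integral \<epsilon>\<^sup>2 *\<^sub>R (dpsi t - dpsi s)) {s..t}"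
    if "lo \<le> s" "s \<le> t" "t \<le> hi" for s t
  proof (rule has_integral_of_ae_equation[OF _ N, of 0 L])
    show "w u *\<^sub>R psi u = \<epsilon>\<^sup>2 *\<^sub>R d2psi u" if "u \<in> {s..t} - N" for u
      using eqN[of u] that \<open>lo \<le> s\<close> \<open>t \<le> hi\<close> by (simp add: w_def)
  qed (use dpsi_deriv that sub in auto)
  ultimately show ?thesis
    using that w_bound unfolding K_def by blast
qed

theorem lemma2p6:
  fixes L \<epsilon> E :: real and V q :: "real \<Rightarrow> real"
    and psi dpsi d2psi :: "real \<Rightarrow> complex"
  assumes L_pos: "L > 0"
    and V_cont: "continuous_on {0..L} V"
    and eps_pos: "\<epsilon> > 0"
    and q_meas: "q \<in> borel_measurable (lebesgue_on {0..L})"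
    and q_bdd: "\<exists>C. AE t in lebesgue_on {0..L}. \<bar>q t\<bar> \<le> C"
    and psi_deriv: "\<forall>t\<in>{0..L}. (psi has_vector_derivative dpsi t) (at t within {0..L})"
    and d2psi_int: "d2psi absolutely_integrable_on {0..L}"
    and d2psi_L2: "(\<lambda>t. (cmod (d2psi t))^2) integrable_on {0..L}"
    and dpsi_deriv: "\<forall>t\<in>{0..L}. (d2psi has_integral (dpsi t - dpsi 0)) {0..t}"
    and bc: "psi 0 = 0" "psi L = 0"
    and eq: "AE t in lebesgue_on {0..L}.
               - complex_of_real (\<epsilon>^2) * d2psi t + complex_of_real (V t + q t) * psi t
               = complex_of_real E * psi t"
    and x: "x \<in> {0..L}" and y: "y \<in> {0..L}"
  shows "\<epsilon>^2 * (cmod (dpsi x))^2 + (cmod (psi x))^2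
         \<le> exp ((1/\<epsilon>) * \<bar>x - y\<bar> *
                 (Linf_norm {min x y..max x y} (\<lambda>t. V t - E + 1) + Linf_norm {0..L} q))
           * (\<epsilon>^2 * (cmod (dpsi y))^2 + (cmod (psi y))^2)"
proof -
  define lo hi where "lo = min x y" and "hi = max x y"
  define K where "K = Linf_norm {lo..hi} (\<lambda>t. V t - E + 1) + Linf_norm {0..L} q"
  have sub: "{lo..hi} \<subseteq> {0..L}" and xy: "x \<in> {lo..hi}" "y \<in> {lo..hi}"
    using x y by (auto simp: lo_def hi_def)
  obtain w where w_int: "w integrable_on {lo..hi}" and w_bound: "\<And>u. u \<in> {lo..hi} \<Longrightarrow> \<bar>w u + 1\<bar> \<le> K"
    and dpsi_int: "\<And>s t. lo \<le> s \<Longrightarrow> s \<le> t \<Longrightarrow> t \<le> hi \<Longrightarrow>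
           ((\<lambda>u. w u *\<^sub>R psi u) has_integral \<epsilon>\<^sup>2 *\<^sub>R (dpsi t - dpsi s)) {s..t}"
    unfolding K_def by (rule schroedinger_integral_form[OF V_cont q_meas q_bdd dpsi_deriv eq sub]) blast
  have psi_deriv': "(psi has_vector_derivative dpsi t) (at t within {lo..hi})" if "t \<in> {lo..hi}" for t
    using psi_deriv that sub by (blast intro: has_vector_derivative_within_subset)
  obtain C where "C \<ge> 0" and "\<And>s p t. lo \<le> s \<Longrightarrow> s \<le> p \<Longrightarrow> p \<le> t \<Longrightarrow> t \<le> hi \<Longrightarrow>
      \<bar>energy \<epsilon> psi dpsi t - energy \<epsilon> psi dpsi s\<bar>
        \<le> K / \<epsilon> * (t - s) * energy \<epsilon> psi dpsi p + C * (t - s)\<^sup>2"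
    by (rule energy_local_increments[OF eps_pos psi_deriv' dpsi_int w_int w_bound]) blast+
  then have "energy \<epsilon> psi dpsi x \<le> exp (K / \<epsilon> * \<bar>x - y\<bar>) * energy \<epsilon> psi dpsi y"
    using Linf_norm_nonneg eps_pos xy energy_nonneg
    by (intro gronwall_local_increments) (auto simp: K_def)
  then show ?thesis
    by (simp add: energy_def K_def lo_def hi_def mult_ac)
qed

end
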